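(* Let $\lambda>0$, $\ell>0$ and $\gamma\in A_\ell$. Assume there is a family $\{\gamma_q\}_{q\in(0,1)}\subset A_\ell$ and $q_0\in(0,1)$ with $\gamma_{q_0}=\gamma$ such that $\frac{d}{dq}\mathcal{E}_\lambda[\gamma_q]\big|_{q=q_0}=0$, $\frac{d^2}{dq^2}\mathcal{E}_\lambda[\gamma_q]\big|_{q=q_0}>0$, and: (i) the map $(0,1)\ni q\mapsto L[\gamma_q]\in(\ell,\infty)$ is continuous and bijective; (ii) for each $q\in(0,1)$, $\gamma_q$ is a global minimizer of $B$ in $\{\eta\in W^{2,2}_{\rm imm}(0,1;\mathbb{R}^2):\eta(0)=(0,0),\ \eta(1)=(\ell,0),\ L[\eta]=L[\gamma_q]\}$. Then $\gamma$ is a stable penalized pinned elastica, i.e. a local minimizer of $\mathcal{E}_\lambda$ in $A_\ell$.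
   Context: $W^{2,2}_{\rm imm}(0,1;\mathbb{R}^2)=\{\gamma\in W^{2,2}(0,1;\mathbb{R}^2): |\gamma'(x)|\neq0\ \forall x\in[0,1]\}$, $A_\ell=\{\gamma\in W^{2,2}_{\rm imm}(0,1;\mathbb{R}^2):\gamma(0)=(0,0),\ \gamma(1)=(\ell,0)\}$. $B[\gamma]=\int_\gamma k^2\,ds$ ($k$ signed curvature, $s$ arclength), $L[\gamma]$ is length, $\mathcal{E}_\lambda=B+\lambda L$. A local minimizer of $\mathcal{E}_\lambda$ in $A_\ell$ is $\gamma\in A_\ell$ such that for some $\delta>0$, $\mathcal{E}_\lambda[\gamma]\le\mathcal{E}_\lambda[\Gamma]$ for all $\Gamma\in A_\ell$ with $\|\Gamma-\gamma\|_{W^{2,2}}<\delta$. *)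

theory Defs
  imports "HOL-Analysis.Analysis"
begin

text \<open>Curves are maps real => real x real (R^2); only their values on [0,1] matter.
  W^{2,2}(0,1;R^2) is represented through the absolutely continuous representative:
  gamma is differentiable on [0,1] with derivative d1, and d1 is the indefinite
  integral of some d2 which is integrable and square integrable on [0,1].\<close>

type_synonym curve = "real \<Rightarrow> real \<times> real"

definition W22_rep :: "curve \<Rightarrow> curve \<Rightarrow> curve \<Rightarrow> bool" where
  "W22_rep \<gamma> d1 d2 \<longleftrightarrow>
     (\<forall>x\<in>{0..1}. (\<gamma> has_vector_derivative d1 x) (at x within {0..1})) \<and>
     d2 absolutely_integrable_on {0..1} \<and>
     (\<lambda>x. (norm (d2 x))\<^sup>2) integrable_on {0..1} \<and>
     (\<forall>x\<in>{0..1}. d1 x = d1 0 + integral {0..x} d2)"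

definition W22 :: "curve \<Rightarrow> bool" where
  "W22 \<gamma> \<longleftrightarrow> (\<exists>d1 d2. W22_rep \<gamma> d1 d2)"

definition wd1 :: "curve \<Rightarrow> curve" where
  "wd1 \<gamma> x = vector_derivative \<gamma> (at x within {0..1})"

definition wd2 :: "curve \<Rightarrow> curve" where
  "wd2 \<gamma> = (SOME d2. W22_rep \<gamma> (wd1 \<gamma>) d2)"

definition W22_imm :: "curve \<Rightarrow> bool" where
  "W22_imm \<gamma> \<longleftrightarrow> W22 \<gamma> \<and> (\<forall>x\<in>{0..1}. wd1 \<gamma> x \<noteq> 0)"

definition A_ell :: "real \<Rightarrow> curve set" where
  "A_ell l = {\<gamma>. W22_imm \<gamma> \<and> \<gamma> 0 = (0, 0) \<and> \<gamma> 1 = (l, 0)}"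

definition W22_norm :: "curve \<Rightarrow> real" where
  "W22_norm f = sqrt (integral {0..1} (\<lambda>x. (norm (f x))\<^sup>2)
                    + integral {0..1} (\<lambda>x. (norm (wd1 f x))\<^sup>2)
                    + integral {0..1} (\<lambda>x. (norm (wd2 f x))\<^sup>2))"

definition Len :: "curve \<Rightarrow> real" where
  "Len \<gamma> = integral {0..1} (\<lambda>x. norm (wd1 \<gamma> x))"

definition curv :: "curve \<Rightarrow> real \<Rightarrow> real" where
  "curv \<gamma> x = (fst (wd1 \<gamma> x) * snd (wd2 \<gamma> x) - snd (wd1 \<gamma> x) * fst (wd2 \<gamma> x))
                / (norm (wd1 \<gamma> x)) ^ 3"

text \<open>Bending energy  B = int k^2 ds = int_0^1 k^2 |gamma'| dx.\<close>
definition Bend :: "curve \<Rightarrow> real" where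
  "Bend \<gamma> = integral {0..1} (\<lambda>x. (curv \<gamma> x)\<^sup>2 * norm (wd1 \<gamma> x))"

definition Elam :: "real \<Rightarrow> curve \<Rightarrow> real" where
  "Elam lam \<gamma> = Bend \<gamma> + lam * Len \<gamma>"

definition local_min_E :: "real \<Rightarrow> real \<Rightarrow> curve \<Rightarrow> bool" where
  "local_min_E lam l \<gamma> \<longleftrightarrow> \<gamma> \<in> A_ell l \<and>
     (\<exists>\<delta>>0. \<forall>\<Gamma>\<in>A_ell l. W22_norm (\<lambda>x. \<Gamma> x - \<gamma> x) < \<delta> \<longrightarrow> Elam lam \<gamma> \<le> Elam lam \<Gamma>)"

end

theory Submission
  imports Defs
begin

text \<open>Near \<open>\<gamma>\<close> in the \<open>W\<^sup>2\<^sup>,\<^sup>2\<close> norm the length is close to \<open>L[\<gamma>]\<close>, because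
  \<open>|L[\<Gamma>] - L[\<gamma>]| \<le> \<integral>|\<Gamma>' - \<gamma>'| \<le> \<parallel>\<Gamma> - \<gamma>\<parallel>\<^sub>W\<^sub>2\<^sub>,\<^sub>2\<close>. A continuous injective real
  function of one variable is an open map, so every length close to \<open>L[\<gamma>]\<close> is attained
  as \<open>L[\<gamma>\<^sub>q]\<close> with \<open>q\<close> close to \<open>q\<^sub>0\<close>. For such a competitor \<open>\<Gamma>\<close> the constrained
  minimality of \<open>\<gamma>\<^sub>q\<close> gives \<open>\<E>\<^sub>\<lambda>[\<Gamma>] \<ge> \<E>\<^sub>\<lambda>[\<gamma>\<^sub>q]\<close>, and the second derivative test
  along the family gives \<open>\<E>\<^sub>\<lambda>[\<gamma>\<^sub>q] \<ge> \<E>\<^sub>\<lambda>[\<gamma>\<^sub>q\<^sub>0] = \<E>\<^sub>\<lambda>[\<gamma>]\<close>.\<close>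

lemma has_vector_derivative_within_unit_interval_cong:
  assumes "\<forall>x\<in>{0..1}. f x = g x" "x \<in> {0..1::real}"
  shows "(f has_vector_derivative v) (at x within {0..1}) \<longleftrightarrow>
         (g has_vector_derivative v) (at x within {0..1})"
proof
  assume "(f has_vector_derivative v) (at x within {0..1})"
  then show "(g has_vector_derivative v) (at x within {0..1})"
    by (rule has_vector_derivative_transform_within[where d=1]) (use assms in auto)
next
  assume "(g has_vector_derivative v) (at x within {0..1})"
  then show "(f has_vector_derivative v) (at x within {0..1})"
    by (rule has_vector_derivative_transform_within[where d=1]) (use assms in auto)
qed

lemma wd1_cong:
  assumes "\<forall>x\<in>{0..1}. f x = g x" "x \<in> {0..1}"
  shows "wd1 f x = wd1 g x"
  unfolding wd1_def vector_derivative_def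
  using has_vector_derivative_within_unit_interval_cong[OF assms] by simp

lemma wd2_cong:
  assumes "\<forall>x\<in>{0..1}. f x = g x"
  shows "wd2 f = wd2 g"
proof -
  have "W22_rep f (wd1 f) d2 = W22_rep g (wd1 g) d2" for d2
    unfolding W22_rep_def
    using wd1_cong[OF assms] has_vector_derivative_within_unit_interval_cong[OF assms]
    by (metis atLeastAtMost_iff order_refl zero_le_one)
  then show ?thesis
    unfolding wd2_def by presburger
qed

lemma Len_cong:
  assumes "\<forall>x\<in>{0..1}. f x = g x"
  shows "Len f = Len g"
  unfolding Len_def by (rule integral_cong) (simp add: wd1_cong[OF assms])

lemma Elam_cong:
  assumes "\<forall>x\<in>{0..1}. f x = g x"
  shows "Elam lam f = Elam lam g"
proof -
  have "Bend f = Bend g"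
    unfolding Bend_def curv_def
    by (rule integral_cong) (simp add: wd1_cong[OF assms] wd2_cong[OF assms])
  then show ?thesis
    unfolding Elam_def using Len_cong[OF assms] by simp
qed

lemma wd1_eqI:
  assumes "(f has_vector_derivative v) (at x within {0..1})" "x \<in> {0..1}"
  shows "wd1 f x = v"
  unfolding wd1_def using assms by (intro vector_derivative_within_closed_interval) simp_all

lemma W22_rep_wd1:
  assumes "W22_rep f d1 d2" "x \<in> {0..1}"
  shows "wd1 f x = d1 x"
  using assms unfolding W22_rep_def by (blast intro: wd1_eqI)

lemma W22_has_vector_derivative_wd1:
  assumes "W22 f" "x \<in> {0..1}"
  shows "(f has_vector_derivative wd1 f x) (at x within {0..1})"
proof -
  obtain d1 d2 where rep: "W22_rep f d1 d2"
    using assms(1) unfolding W22_def by blast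
  then have "(f has_vector_derivative d1 x) (at x within {0..1})"
    using assms(2) unfolding W22_rep_def by blast
  then show ?thesis
    using W22_rep_wd1[OF rep assms(2)] by simp
qed

lemma W22_continuous_on_wd1:
  assumes "W22 f"
  shows "continuous_on {0..1} (wd1 f)"
proof -
  obtain d1 d2 where rep: "W22_rep f d1 d2"
    using assms unfolding W22_def by blast
  have "d2 integrable_on {0..1}"
    using rep unfolding W22_rep_def absolutely_integrable_on_def by blast
  then have "continuous_on {0..1} (\<lambda>x. d1 0 + integral {0..x} d2)"
    by (intro continuous_on_add continuous_on_const indefinite_integral_continuous_1)
  moreover have "d1 0 + integral {0..x} d2 = wd1 f x" if x: "x \<in> {0..1}" for x
  proof -
    have "d1 x = d1 0 + integral {0..x} d2"
      using rep x unfolding W22_rep_def by blast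
    then show ?thesis
      using W22_rep_wd1[OF rep x] by simp
  qed
  ultimately show ?thesis
    by (rule continuous_on_eq)
qed

lemma wd1_diff:
  assumes "W22 f" "W22 g" "x \<in> {0..1}"
  shows "wd1 (\<lambda>y. f y - g y) x = wd1 f x - wd1 g x"
proof -
  have "((\<lambda>y. f y - g y) has_vector_derivative wd1 f x - wd1 g x) (at x within {0..1})"
    using assms by (simp add: has_vector_derivative_diff W22_has_vector_derivative_wd1)
  then show ?thesis
    using assms(3) by (rule wd1_eqI)
qed

lemma sqrt_integral_square_wd1_le_W22_norm:
  "sqrt (integral {0..1} (\<lambda>x. (norm (wd1 f x))\<^sup>2)) \<le> W22_norm f"
proof -
  \<comment> \<open>A non-integrable function has integral 0, so no integrability is needed here.\<close>
  have nonneg: "0 \<le> integral {0..1} (\<lambda>x. (norm (h x))\<^sup>2)" for h :: curve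
    by (cases "(\<lambda>x. (norm (h x))\<^sup>2) integrable_on {0..1}")
       (simp_all add: integral_nonneg not_integrable_integral)
  show ?thesis
    unfolding W22_norm_def using nonneg[of f] nonneg[of "wd2 f"] by simp
qed

lemma integral_le_sqrt_integral_square:
  fixes f :: "real \<Rightarrow> real"
  assumes f: "f integrable_on {0..1}" and f2: "(\<lambda>x. (f x)\<^sup>2) integrable_on {0..1}"
  shows "integral {0..1} f \<le> sqrt (integral {0..1} (\<lambda>x. (f x)\<^sup>2))"
proof -
  define I where "I = integral {0..1} (\<lambda>x. (f x)\<^sup>2)"
  have I_nonneg: "0 \<le> I"
    unfolding I_def using f2 by (intro integral_nonneg) auto
  have AM_GM: "integral {0..1} f \<le> e/2 + I/(2*e)" if e: "e > 0" for e
  proof -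
    have "f x \<le> e/2 + (f x)\<^sup>2/(2*e)" for x
    proof -
      have "2*e*f x \<le> e\<^sup>2 + (f x)\<^sup>2"
        using sum_power2_ge_zero[of "e - f x" 0] by (simp add: power2_eq_square algebra_simps)
      then show ?thesis using e by (simp add: field_simps power2_eq_square)
    qed
    then have "integral {0..1} f \<le> integral {0..1} (\<lambda>x. e/2 + (f x)\<^sup>2/(2*e))"
      using f f2 by (intro integral_le integrable_add integrable_on_divide) auto
    also have "\<dots> = e/2 + I/(2*e)"
      unfolding I_def using f2 by (subst integral_add) (auto intro: integrable_on_divide)
    finally show ?thesis .
  qed
  show ?thesis
  proof (cases "I = 0")
    case True
    then have "integral {0..1} f \<le> 0 + e" if "e > 0" for e
      using AM_GM[of "2*e"] that by simp
    then have "integral {0..1} f \<le> 0"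
      by (rule field_le_epsilon)
    then show ?thesis
      unfolding I_def[symmetric] using True by simp
  next
    case False
    then have root_pos: "sqrt I > 0"
      using I_nonneg by simp
    have "I/(2 * sqrt I) = sqrt I/2"
      using real_div_sqrt[OF I_nonneg] by simp
    then show ?thesis
      using AM_GM[OF root_pos] unfolding I_def by simp
  qed
qed

lemma Len_diff_le_W22_norm:
  assumes G: "W22 \<Gamma>" and g: "W22 \<gamma>"
  shows "\<bar>Len \<Gamma> - Len \<gamma>\<bar> \<le> W22_norm (\<lambda>x. \<Gamma> x - \<gamma> x)"
proof -
  define h where "h = (\<lambda>x. \<Gamma> x - \<gamma> x)"
  have wd1_h: "wd1 \<Gamma> x - wd1 \<gamma> x = wd1 h x" if "x \<in> {0..1}" for x
    unfolding h_def using wd1_diff[OF G g that] by simp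
  have cont_G: "continuous_on {0..1} (wd1 \<Gamma>)" and cont_g: "continuous_on {0..1} (wd1 \<gamma>)"
    using G g by (simp_all add: W22_continuous_on_wd1)
  have integrable_norm: "(\<lambda>x. norm (u x)) integrable_on {0..1}"
    if "continuous_on {0..1} u" for u :: curve
    using that by (intro integrable_continuous_interval continuous_on_norm)
  have integrable_norm2: "(\<lambda>x. (norm (u x))\<^sup>2) integrable_on {0..1}"
    if "continuous_on {0..1} u" for u :: curve
    using that by (intro integrable_continuous_interval continuous_on_power continuous_on_norm)
  have cont_h: "continuous_on {0..1} (wd1 h)"
    using continuous_on_diff[OF cont_G cont_g] wd1_h by (rule continuous_on_eq)
  have int_h: "(\<lambda>x. norm (wd1 h x)) integrable_on {0..1}"
    using cont_h by (rule integrable_norm)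
  have int_h2: "(\<lambda>x. (norm (wd1 h x))\<^sup>2) integrable_on {0..1}"
    using cont_h by (rule integrable_norm2)
  have int_G: "(\<lambda>x. norm (wd1 \<Gamma> x)) integrable_on {0..1}"
    and int_g: "(\<lambda>x. norm (wd1 \<gamma> x)) integrable_on {0..1}"
    using integrable_norm cont_G cont_g by blast+
  have "\<bar>Len \<Gamma> - Len \<gamma>\<bar> = \<bar>integral {0..1} (\<lambda>x. norm (wd1 \<Gamma> x) - norm (wd1 \<gamma> x))\<bar>"
    unfolding Len_def using int_G int_g by (simp add: integral_diff)
  also have "\<dots> \<le> integral {0..1} (\<lambda>x. norm (wd1 h x))"
  proof -
    have "norm (norm (wd1 \<Gamma> x) - norm (wd1 \<gamma> x)) \<le> norm (wd1 h x)" if "x \<in> {0..1}" for x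
      using norm_triangle_ineq3[of "wd1 \<Gamma> x" "wd1 \<gamma> x"] wd1_h[OF that] by simp
    then show ?thesis
      using integral_norm_bound_integral[OF integrable_diff[OF int_G int_g] int_h] by simp
  qed
  also have "\<dots> \<le> sqrt (integral {0..1} (\<lambda>x. (norm (wd1 h x))\<^sup>2))"
    using integral_le_sqrt_integral_square[OF int_h int_h2] by simp
  also have "\<dots> \<le> W22_norm h"
    by (rule sqrt_integral_square_wd1_le_W22_norm)
  finally show ?thesis
    unfolding h_def .
qed

lemma second_derivative_test_local_min:
  fixes f f' :: "real \<Rightarrow> real"
  assumes f': "\<forall>\<^sub>F x in nhds a. (f has_real_derivative f' x) (at x)"
    and "f' a = 0" and f'': "(f' has_real_derivative c) (at a)" "c > 0"
  shows "\<forall>\<^sub>F x in nhds a. f a \<le> f x"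
proof -
  obtain r where r: "r > 0" "\<And>x. dist x a < r \<Longrightarrow> (f has_real_derivative f' x) (at x)"
    using f' unfolding eventually_nhds_metric by (metis dist_commute)
  obtain d1 where d1: "d1 > 0" "\<And>h. h > 0 \<Longrightarrow> h < d1 \<Longrightarrow> f' a < f' (a + h)"
    using DERIV_pos_inc_right[OF f''] by blast
  obtain d2 where d2: "d2 > 0" "\<And>h. h > 0 \<Longrightarrow> h < d2 \<Longrightarrow> f' (a - h) < f' a"
    using DERIV_pos_inc_left[OF f''] by blast
  define s where "s = min r (min d1 d2)"
  have cont: "continuous_on {u..v} f" if "{u..v} \<subseteq> ball a s" for u v
  proof (intro continuous_at_imp_continuous_on ballI)
    fix x assume "x \<in> {u..v}"
    then have "dist x a < r"
      using that by (auto simp: s_def dist_commute)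
    then show "isCont f x"
      using r(2) DERIV_isCont by blast
  qed
  have "f a \<le> f x" if x: "dist x a < s" for x
  proof (cases "a \<le> x")
    case True
    show ?thesis
    proof (rule DERIV_nonneg_imp_increasing_open[OF True])
      fix y assume "a < y" "y < x"
      then show "\<exists>z. (f has_real_derivative z) (at y) \<and> 0 \<le> z"
        using r(2)[of y] d1(2)[of "y - a"] x \<open>f' a = 0\<close>
        by (intro exI[of _ "f' y"]) (auto simp: s_def dist_real_def)
    qed (use x in \<open>intro cont, auto simp: dist_real_def\<close>)
  next
    case False
    then have "x \<le> a"
      by simp
    then show ?thesis
    proof (rule DERIV_nonpos_imp_decreasing_open)
      fix y assume "x < y" "y < a"
      then show "\<exists>z. (f has_real_derivative z) (at y) \<and> z \<le> 0"
        using r(2)[of y] d2(2)[of "a - y"] x \<open>f' a = 0\<close>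
        by (intro exI[of _ "f' y"]) (auto simp: s_def dist_real_def)
    qed (use x in \<open>intro cont, auto simp: dist_real_def\<close>)
  qed
  moreover have "s > 0"
    using r d1 d2 by (simp add: s_def)
  ultimately show ?thesis
    unfolding eventually_nhds_metric by metis
qed

lemma eventually_nhds_image_inj_on_1d:
  fixes g :: "'a::euclidean_space \<Rightarrow> real"
  assumes "open T" "continuous_on T g" "inj_on g T" "a \<in> T" "\<forall>\<^sub>F x in nhds a. P x"
  shows "\<forall>\<^sub>F y in nhds (g a). \<exists>x\<in>T. P x \<and> g x = y"
proof -
  obtain U where U: "open U" "a \<in> U" "\<forall>x\<in>U. P x"
    using assms(5) unfolding eventually_nhds by blast
  have "open (g ` (T \<inter> U))"
    using assms(1-3) U(1) by (intro injective_into_1d_imp_open_map_UNIV) auto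
  then show ?thesis
    unfolding eventually_nhds using assms(4) U by (intro exI[of _ "g ` (T \<inter> U)"]) auto
qed

theorem lemma3p1:
  fixes lam l q0 :: real and \<gamma> :: curve and \<gamma>q :: "real \<Rightarrow> curve"
  assumes "lam > 0" and "l > 0" and "\<gamma> \<in> A_ell l"
    and fam: "\<forall>q\<in>{0<..<1}. \<gamma>q q \<in> A_ell l"
    and q0: "q0 \<in> {0<..<1}" and eq: "\<forall>x\<in>{0..1}. \<gamma>q q0 x = \<gamma> x"
    and deriv: "\<exists>e'. (\<forall>\<^sub>F q in nhds q0. ((\<lambda>p. Elam lam (\<gamma>q p)) has_real_derivative e' q) (at q))
                  \<and> e' q0 = 0 \<and> (\<exists>c>0. (e' has_real_derivative c) (at q0))"
    and cont: "continuous_on {0<..<1} (\<lambda>q. Len (\<gamma>q q))"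
    and bij: "bij_betw (\<lambda>q. Len (\<gamma>q q)) {0<..<1} {l<..}"
    and minB: "\<forall>q\<in>{0<..<1}. \<forall>\<eta>. W22_imm \<eta> \<and> \<eta> 0 = (0, 0) \<and> \<eta> 1 = (l, 0)
                  \<and> Len \<eta> = Len (\<gamma>q q) \<longrightarrow> Bend (\<gamma>q q) \<le> Bend \<eta>"
  shows "local_min_E lam l \<gamma>"
proof -
  have "\<forall>\<^sub>F q in nhds q0. Elam lam (\<gamma>q q0) \<le> Elam lam (\<gamma>q q)"
    using deriv second_derivative_test_local_min by blast
  then have "\<forall>\<^sub>F y in nhds (Len (\<gamma>q q0)).
      \<exists>q\<in>{0<..<1}. Elam lam (\<gamma>q q0) \<le> Elam lam (\<gamma>q q) \<and> Len (\<gamma>q q) = y"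
    using cont bij_betw_imp_inj_on[OF bij] q0 by (intro eventually_nhds_image_inj_on_1d) auto
  then obtain e where "e > 0" and e: "\<And>y. dist y (Len \<gamma>) < e \<Longrightarrow>
      \<exists>q\<in>{0<..<1}. Elam lam \<gamma> \<le> Elam lam (\<gamma>q q) \<and> Len (\<gamma>q q) = y"
    unfolding eventually_nhds_metric Len_cong[OF eq] Elam_cong[OF eq] by (metis dist_commute)
  have "Elam lam \<gamma> \<le> Elam lam \<Gamma>"
    if \<Gamma>: "\<Gamma> \<in> A_ell l" and close: "W22_norm (\<lambda>x. \<Gamma> x - \<gamma> x) < e" for \<Gamma>
  proof -
    have "\<bar>Len \<Gamma> - Len \<gamma>\<bar> < e"
      using Len_diff_le_W22_norm close \<Gamma> \<open>\<gamma> \<in> A_ell l\<close>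
      by (fastforce simp: A_ell_def W22_imm_def)
    then obtain q where "q \<in> {0<..<1}" "Elam lam \<gamma> \<le> Elam lam (\<gamma>q q)" "Len (\<gamma>q q) = Len \<Gamma>"
      using e by (force simp: dist_real_def)
    moreover from this have "Bend (\<gamma>q q) \<le> Bend \<Gamma>"
      using minB \<Gamma> by (simp add: A_ell_def)
    ultimately show ?thesis
      by (simp add: Elam_def)
  qed
  then show ?thesis
    unfolding local_min_E_def using \<open>\<gamma> \<in> A_ell l\<close> \<open>e > 0\<close> by blast
qed

end
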